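(* Let $r\in(0,1)$ and let $X$ be the geometric armadillo tail with parameter $r$. Then there exists a closed saddle connection on $X$ in the direction of slope $\frac{1}{2-r}$ that intersects every square torus $\square_k$, $k\ge1$.
   Context: Set $l_k=r^{k-1}$, $s_k=l_1+\dots+l_k$ ($s_0=0$), and $\square_k=[s_{k-1},s_k]\times[0,l_k]\subset\mathbb{R}^2$. The geometric armadillo tail with parameter $r$ is obtained from $P=\bigcup_k\square_k$ by gluing the top edge of each $\square_k$ to its bottom edge by vertical translation, and for each $k\ge1$ gluing $\{s_k\}\times[l_{k+1},l_k]$ (the part of the right edge of $\square_k$ not shared with $\square_{k+1}$) by horizontal translation to $\{0\}\times[l_{k+1},l_k]$; then taking the metric completion, in which all vertices become a single wild singularity. With these identifications each $\square_k$ is a square torus (the surface is an infinite connected sum of them). Slopes are measured in the polygonal representation $P$. A saddle connection is a closed straight-line segment starting and ending at the singularity with no singular point in its interior. *)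

theory Defs
  imports "HOL-Analysis.Analysis"
begin

text \<open>Geometric armadillo tail with parameter r, in its polygonal representation
  P = union of the squares sq r k, k \<ge> 1.  Points of the plane are real \<times> real.\<close>

definition arm_l :: "real \<Rightarrow> nat \<Rightarrow> real" where
  "arm_l r k = r ^ (k - 1)"

definition arm_s :: "real \<Rightarrow> nat \<Rightarrow> real" where
  "arm_s r k = (\<Sum>j\<in>{1..k}. arm_l r j)"

definition arm_sq :: "real \<Rightarrow> nat \<Rightarrow> (real \<times> real) set" where
  "arm_sq r k = {arm_s r (k - 1) .. arm_s r k} \<times> {0 .. arm_l r k}"

definition arm_P :: "real \<Rightarrow> (real \<times> real) set" where
  "arm_P r = (\<Union>k\<in>{1..}. arm_sq r k)"

text \<open>Vertices of the polygonal representation (corners of the squares and endpoints of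
  the glued pieces of the left edge).  They all represent the single singular point.\<close>
definition arm_vert :: "real \<Rightarrow> (real \<times> real) set" where
  "arm_vert r = (\<Union>k\<in>{1..}. {(arm_s r (k - 1), 0), (arm_s r k, 0),
                               (arm_s r (k - 1), arm_l r k), (arm_s r k, arm_l r k),
                               (0, arm_l r k)})"

text \<open>Points in (the closure of) P representing the singularity of the metric completion:
  the vertices together with the accumulation point (s_\<infinity>, 0), s_\<infinity> = 1/(1-r).\<close>
definition arm_sing :: "real \<Rightarrow> (real \<times> real) set" where
  "arm_sing r = arm_vert r \<union> {(1 / (1 - r), 0)}"

text \<open>Edge gluings: bottom edge of each square to its top edge (vertical translation), and
  the free part \<open>{s_k} \<times> [l_{k+1}, l_k]\<close> of the right edge of square k to \<open>{0} \<times> [l_{k+1}, l_k]\<close>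
  (horizontal translation).\<close>
definition arm_glue1 :: "real \<Rightarrow> real \<times> real \<Rightarrow> real \<times> real \<Rightarrow> bool" where
  "arm_glue1 r p q \<longleftrightarrow>
     (\<exists>k\<ge>1. \<exists>x. arm_s r (k - 1) \<le> x \<and> x \<le> arm_s r k \<and> p = (x, 0) \<and> q = (x, arm_l r k)) \<or>
     (\<exists>k\<ge>1. \<exists>y. arm_l r (k + 1) \<le> y \<and> y \<le> arm_l r k \<and> p = (arm_s r k, y) \<and> q = (0, y))"

definition arm_glued :: "real \<Rightarrow> real \<times> real \<Rightarrow> real \<times> real \<Rightarrow> bool" where
  "arm_glued r p q \<longleftrightarrow> arm_glue1 r p q \<or> arm_glue1 r q p"

text \<open>A straight-line trajectory in direction parallel to w, unfolded in the polygon P: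
  a finite (I = {..<n}) or infinite (I = UNIV) sequence of nondegenerate segments
  [a i, b i] \<subseteq> P, each pointing in the same direction (a nonzero multiple of w),
  with no vertex in the open segments, consecutive segments joined through the gluing at
  non-vertex points; it starts at a vertex (the singularity).\<close>
definition arm_traj ::
  "real \<Rightarrow> real \<times> real \<Rightarrow> (nat \<Rightarrow> real \<times> real) \<Rightarrow> (nat \<Rightarrow> real \<times> real) \<Rightarrow> nat set \<Rightarrow> bool" where
  "arm_traj r w a b I \<longleftrightarrow>
     (\<exists>v. (\<exists>c. c \<noteq> 0 \<and> v = c *\<^sub>R w) \<and>
       (\<forall>i\<in>I. closed_segment (a i) (b i) \<subseteq> arm_P r \<and>
               (\<exists>t>0. b i - a i = t *\<^sub>R v) \<and>
               open_segment (a i) (b i) \<inter> arm_vert r = {})) \<and>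
     (\<forall>i. i \<in> I \<and> Suc i \<in> I \<longrightarrow> b i \<notin> arm_vert r \<and> arm_glued r (b i) (a (Suc i))) \<and>
     0 \<in> I \<and> a 0 \<in> arm_vert r"

text \<open>Saddle connection in direction parallel to w: either finitely many pieces ending at a
  vertex, or infinitely many pieces of finite total length whose endpoints approach the
  singular set (so the segment ends at the wild singularity of the metric completion).\<close>
definition arm_saddle_connection ::
  "real \<Rightarrow> real \<times> real \<Rightarrow> (nat \<Rightarrow> real \<times> real) \<Rightarrow> (nat \<Rightarrow> real \<times> real) \<Rightarrow> nat set \<Rightarrow> bool" where
  "arm_saddle_connection r w a b I \<longleftrightarrow>
     arm_traj r w a b I \<and>
     ((\<exists>n\<ge>1. I = {..<n} \<and> b (n - 1) \<in> arm_vert r) \<or>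
      (I = UNIV \<and> summable (\<lambda>i. dist (a i) (b i)) \<and>
       (\<lambda>i. infdist (b i) (arm_sing r)) \<longlonglongrightarrow> 0))"

definition arm_trace ::
  "(nat \<Rightarrow> real \<times> real) \<Rightarrow> (nat \<Rightarrow> real \<times> real) \<Rightarrow> nat set \<Rightarrow> (real \<times> real) set" where
  "arm_trace a b I = (\<Union>i\<in>I. closed_segment (a i) (b i))"

end

theory Submission
  imports Defs
begin

text \<open>The saddle connection starts at the corner (0, 0) of square 1, meets the free part of its
  right edge at height 1/(2 - r), which lies strictly between r and 1, re-enters at the left edge
  and reaches the top edge of square 1 at (1 - r, 1). From then on it is self-similar: the piece
  starting on the bottom edge of square k + 1 at distance (1 - r) l_{k+1} from its left corner
  crosses into square k + 2 and meets its top edge at distance (1 - r) l_{k+2} from the vertex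
  (s_{k+1}, l_{k+2}); the vertical gluing starts the next piece there. The pieces have lengths
  l_{k+2} |(2 - r, 1)|, so the total length is finite and the endpoints converge to the
  singularity.\<close>

lemma arm_l_Suc [simp]: "arm_l r (Suc k) = r ^ k"
  by (simp add: arm_l_def)

lemma arm_s_0 [simp]: "arm_s r 0 = 0"
  by (simp add: arm_s_def)

lemma arm_s_Suc: "arm_s r (Suc n) = arm_s r n + r ^ n"
  by (simp add: arm_s_def)

lemma arm_s_1 [simp]: "arm_s r (Suc 0) = 1" "arm_s r 1 = 1"
  using arm_s_Suc[of r 0] by simp_all

lemma arm_s_mono: "0 \<le> r \<Longrightarrow> m \<le> n \<Longrightarrow> arm_s r m \<le> arm_s r n"
  unfolding arm_s_def by (rule sum_mono2) (auto simp: arm_l_def)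

lemma arm_s_nonneg: "0 \<le> r \<Longrightarrow> 0 \<le> arm_s r n"
  using arm_s_mono[of r 0 n] by simp

lemma arm_sq_subset_P: "1 \<le> k \<Longrightarrow> arm_sq r k \<subseteq> arm_P r"
  by (auto simp: arm_P_def)

lemma convex_arm_sq: "convex (arm_sq r k)"
  by (simp add: arm_sq_def convex_Times)

lemma arm_two_squares_subset_P:
  assumes "0 \<le> r" "r \<le> 1"
  shows "{arm_s r n .. arm_s r (Suc (Suc n))} \<times> {0 .. r ^ Suc n} \<subseteq> arm_P r"
proof
  fix p assume p: "p \<in> {arm_s r n .. arm_s r (Suc (Suc n))} \<times> {0 .. r ^ Suc n}"
  have "p \<in> arm_sq r (Suc n) \<union> arm_sq r (Suc (Suc n))"
  proof (cases "fst p \<le> arm_s r (Suc n)")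
    case True
    have "r ^ Suc n \<le> r ^ n" using assms by (intro power_decreasing) auto
    with p True show ?thesis by (auto simp: arm_sq_def)
  qed (use p in \<open>auto simp: arm_sq_def\<close>)
  then show "p \<in> arm_P r"
    using arm_sq_subset_P[of "Suc n" r] arm_sq_subset_P[of "Suc (Suc n)" r] by auto
qed

lemma arm_vert_cases:
  assumes "(x, y) \<in> arm_vert r"
  shows "y = 0 \<or> (\<exists>k. y = r ^ k \<and> (x = 0 \<or> x = arm_s r k \<or> x = arm_s r (Suc k)))"
proof -
  obtain k where "1 \<le> k" and "(x, y) \<in> {(arm_s r (k - 1), 0), (arm_s r k, 0),
      (arm_s r (k - 1), arm_l r k), (arm_s r k, arm_l r k), (0, arm_l r k)}"
    using assms unfolding arm_vert_def by blast
  then obtain j where "k = Suc j"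
    and "y = 0 \<or> (y = r ^ j \<and> (x = 0 \<or> x = arm_s r j \<or> x = arm_s r (Suc j)))"
    by (cases k) auto
  then show ?thesis by blast
qed

lemma arm_vert_at_power:
  assumes "0 < r" "r < 1" "(x, r ^ k) \<in> arm_vert r"
  shows "x = 0 \<or> x = arm_s r k \<or> x = arm_s r (Suc k)"
  using arm_vert_cases[OF assms(3)] assms(1,2) by (auto simp: power_inject_exp')

lemma arm_vert_snd_not_between:
  assumes "0 < r" "r < 1" "r ^ Suc m < y" "y < r ^ m"
  shows "(x, y) \<notin> arm_vert r"
proof
  assume "(x, y) \<in> arm_vert r"
  moreover have "y \<noteq> 0" using assms by (metis order.asym zero_less_power)
  ultimately obtain k where "y = r ^ k" using arm_vert_cases by blast
  then have "m < k" "k < Suc m"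
    using assms power_strict_decreasing_iff[OF assms(1,2)] by metis+
  then show False by simp
qed

lemma arm_vert_disjoint_box:
  assumes "0 < r" "r < 1"
  shows "arm_vert r \<inter> ({0<..<arm_s r (Suc m)} \<times> {0<..<r ^ m}) = {}"
proof (rule ccontr)
  assume "\<not> ?thesis"
  then obtain x y where v: "(x, y) \<in> arm_vert r" and x: "0 < x" "x < arm_s r (Suc m)"
    and y: "0 < y" "y < r ^ m" by auto
  then obtain k where k: "y = r ^ k" and kx: "x = 0 \<or> x = arm_s r k \<or> x = arm_s r (Suc k)"
    using arm_vert_cases by blast
  have "Suc m \<le> k" using y k assms by simp
  then have "arm_s r (Suc m) \<le> arm_s r k" "arm_s r (Suc m) \<le> arm_s r (Suc k)"
    using arm_s_mono assms by auto
  then show False using x kx by auto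
qed

lemma open_segment_Pair_subset_box:
  fixes a a' b b' :: real
  assumes "a < b" "a' < b'"
  shows "open_segment (a, a') (b, b') \<subseteq> {a<..<b} \<times> {a'<..<b'}"
  using assms by (auto dest!: open_segment_PairD simp: open_segment_eq_real_ivl)

lemma arm_vert_disjoint_open_segment:
  assumes "0 < r" "r < 1"
    and "0 \<le> a" "a < b" "b \<le> arm_s r (Suc m)" and "0 \<le> a'" "a' < b'" "b' \<le> r ^ m"
  shows "open_segment (a, a') (b, b') \<inter> arm_vert r = {}"
proof -
  have "open_segment (a, a') (b, b') \<subseteq> {0<..<arm_s r (Suc m)} \<times> {0<..<r ^ m}"
    using open_segment_Pair_subset_box[of a b a' b'] assms by fastforce
  then show ?thesis using arm_vert_disjoint_box[OF assms(1,2), of m] by blast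
qed

lemma nat_cases_0_1_SucSuc [case_names 0 1 SucSuc]:
  obtains "i = 0" | "i = Suc 0" | n where "i = Suc (Suc n)"
  by (metis not0_implies_Suc)

lemma one_div_two_minus_between:
  fixes r :: real
  assumes "0 < r" "r < 1"
  shows "r < 1 / (2 - r)" "1 / (2 - r) < 1"
proof -
  have "r * (2 - r) = 1 - (1 - r)\<^sup>2" by (simp add: power2_eq_square algebra_simps)
  also have "\<dots> < 1" using assms by simp
  finally show "r < 1 / (2 - r)" using assms by (simp add: field_simps)
  show "1 / (2 - r) < 1" using assms by (simp add: field_simps)
qed

fun arm_conn_start :: "real \<Rightarrow> nat \<Rightarrow> real \<times> real" where
  "arm_conn_start r 0 = (0, 0)"
| "arm_conn_start r (Suc 0) = (0, 1 / (2 - r))"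
| "arm_conn_start r (Suc (Suc n)) = (arm_s r n + (1 - r) * r ^ n, 0)"

fun arm_conn_end :: "real \<Rightarrow> nat \<Rightarrow> real \<times> real" where
  "arm_conn_end r 0 = (1, 1 / (2 - r))"
| "arm_conn_end r (Suc 0) = (1 - r, 1)"
| "arm_conn_end r (Suc (Suc n)) = (arm_s r (Suc n) + (1 - r) * r ^ Suc n, r ^ Suc n)"

lemma arm_conn_tail_coords:
  assumes "0 < r" "r < 1"
  obtains x0 x1 where "arm_conn_start r (Suc (Suc n)) = (x0, 0)"
    and "arm_conn_end r (Suc (Suc n)) = (x1, r ^ Suc n)"
    and "arm_s r n < x0" "x0 < arm_s r (Suc n)"
    and "arm_s r (Suc n) < x1" "x1 < arm_s r (Suc (Suc n))"
  using assms
  by (intro that[of "arm_s r n + (1 - r) * r ^ n" "arm_s r (Suc n) + (1 - r) * r ^ Suc n"])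
    (simp_all add: arm_s_Suc)

lemma arm_conn_tail_diff:
  "arm_conn_end r (Suc (Suc n)) - arm_conn_start r (Suc (Suc n)) = r ^ Suc n *\<^sub>R (2 - r, 1)"
  by (simp add: arm_s_Suc algebra_simps)

lemma arm_conn_direction:
  assumes "0 < r" "r < 1"
  shows "\<exists>t>0. arm_conn_end r i - arm_conn_start r i = t *\<^sub>R (2 - r, 1)"
proof (cases i rule: nat_cases_0_1_SucSuc)
  case 0
  show ?thesis
    by (rule exI[of _ "1 / (2 - r)"]) (use assms 0 in \<open>simp add: field_simps\<close>)
next
  case 1
  show ?thesis
    by (rule exI[of _ "(1 - r) / (2 - r)"]) (use assms 1 in \<open>simp add: field_simps\<close>)
next
  case (SucSuc n)
  show ?thesis
    by (rule exI[of _ "r ^ Suc n"]) (use assms SucSuc arm_conn_tail_diff in simp)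
qed

lemma arm_conn_segment_subset_P:
  assumes "0 < r" "r < 1"
  shows "closed_segment (arm_conn_start r i) (arm_conn_end r i) \<subseteq> arm_P r"
proof -
  have in_sq1: "closed_segment (arm_conn_start r i) (arm_conn_end r i) \<subseteq> arm_P r"
    if "arm_conn_start r i \<in> arm_sq r 1" "arm_conn_end r i \<in> arm_sq r 1"
    using closed_segment_subset[OF that convex_arm_sq] arm_sq_subset_P[of 1 r] by auto
  show ?thesis
  proof (cases i rule: nat_cases_0_1_SucSuc)
    case (SucSuc n)
    let ?box = "{arm_s r n .. arm_s r (Suc (Suc n))} \<times> {0 .. r ^ Suc n}"
    obtain x0 x1 where "arm_conn_start r i = (x0, 0)" "arm_conn_end r i = (x1, r ^ Suc n)"
      and "arm_s r n < x0" "x0 < arm_s r (Suc n)"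
      and "arm_s r (Suc n) < x1" "x1 < arm_s r (Suc (Suc n))"
      using arm_conn_tail_coords[OF assms, of n] SucSuc by metis
    then have "arm_conn_start r i \<in> ?box" "arm_conn_end r i \<in> ?box"
      using assms by auto
    then have "closed_segment (arm_conn_start r i) (arm_conn_end r i) \<subseteq> ?box"
      by (intro closed_segment_subset convex_Times) auto
    then show ?thesis using arm_two_squares_subset_P[of r n] assms by auto
  qed (use assms in_sq1 one_div_two_minus_between[OF assms] in \<open>auto simp: arm_sq_def\<close>)
qed

lemma arm_conn_open_segment_no_vertex:
  assumes "0 < r" "r < 1"
  shows "open_segment (arm_conn_start r i) (arm_conn_end r i) \<inter> arm_vert r = {}"
proof (cases i rule: nat_cases_0_1_SucSuc)
  case 0
  show ?thesis
    using arm_vert_disjoint_open_segment[OF assms, of 0 1 0 0 "1 / (2 - r)"]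
      one_div_two_minus_between[OF assms] assms 0 by simp
next
  case 1
  show ?thesis
    using arm_vert_disjoint_open_segment[OF assms, of 0 "1 - r" 0 "1 / (2 - r)" 1]
      one_div_two_minus_between[OF assms] assms 1 by simp
next
  case (SucSuc n)
  obtain x0 x1 where "arm_conn_start r i = (x0, 0)" "arm_conn_end r i = (x1, r ^ Suc n)"
    and "arm_s r n < x0" "x0 < arm_s r (Suc n)"
    and "arm_s r (Suc n) < x1" "x1 < arm_s r (Suc (Suc n))"
    using arm_conn_tail_coords[OF assms, of n] SucSuc by metis
  moreover have "0 \<le> arm_s r n" using assms arm_s_nonneg by simp
  ultimately show ?thesis
    using arm_vert_disjoint_open_segment[OF assms, of x0 x1 "Suc n" 0 "r ^ Suc n"] assms by simp
qed

lemma arm_conn_end_not_vertex: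
  assumes "0 < r" "r < 1"
  shows "arm_conn_end r i \<notin> arm_vert r"
proof (cases i rule: nat_cases_0_1_SucSuc)
  case 0
  show ?thesis
    using arm_vert_snd_not_between[OF assms, of 0 "1 / (2 - r)"]
      one_div_two_minus_between[OF assms] 0 by simp
next
  case 1
  show ?thesis
    using arm_vert_at_power[OF assms, of "1 - r" 0] assms 1 by auto
next
  case (SucSuc n)
  obtain x where "arm_conn_end r i = (x, r ^ Suc n)"
    and "arm_s r (Suc n) < x" "x < arm_s r (Suc (Suc n))"
    using arm_conn_tail_coords[OF assms, of n] SucSuc by metis
  moreover have "0 \<le> arm_s r (Suc n)" using assms arm_s_nonneg by simp
  ultimately show ?thesis using arm_vert_at_power[OF assms, of x "Suc n"] by auto
qed

lemma arm_conn_glued: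
  assumes "0 < r" "r < 1"
  shows "arm_glued r (arm_conn_end r i) (arm_conn_start r (Suc i))"
proof (cases i rule: nat_cases_0_1_SucSuc)
  case 0
  have "arm_glue1 r (arm_conn_end r i) (arm_conn_start r (Suc i))"
    unfolding arm_glue1_def
    by (intro disjI2 exI[of _ "1::nat"] exI[of _ "1 / (2 - r)"])
       (use one_div_two_minus_between[OF assms] 0 in auto)
  then show ?thesis by (simp add: arm_glued_def)
next
  case 1
  have "arm_glue1 r (arm_conn_start r (Suc i)) (arm_conn_end r i)"
    unfolding arm_glue1_def
    by (intro disjI1 exI[of _ "1::nat"] exI[of _ "1 - r"]) (use assms 1 in auto)
  then show ?thesis by (simp add: arm_glued_def)
next
  case (SucSuc n)
  obtain x where "arm_conn_end r i = (x, r ^ Suc n)"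
    and "arm_s r (Suc n) < x" "x < arm_s r (Suc (Suc n))"
    using arm_conn_tail_coords[OF assms, of n] SucSuc by metis
  moreover have "arm_conn_start r (Suc i) = (x, 0)"
    using calculation(1) SucSuc by simp
  ultimately have "arm_glue1 r (arm_conn_start r (Suc i)) (arm_conn_end r i)"
    unfolding arm_glue1_def
    by (intro disjI1 exI[of _ "Suc (Suc n)"] exI[of _ x]) auto
  then show ?thesis by (simp add: arm_glued_def)
qed

lemma arm_conn_start_vertex: "arm_conn_start r 0 \<in> arm_vert r"
  unfolding arm_vert_def by (rule UN_I[of 1]) auto

lemma arm_conn_traj:
  assumes "0 < r" "r < 1"
  shows "arm_traj r (2 - r, 1) (arm_conn_start r) (arm_conn_end r) UNIV"
  unfolding arm_traj_def
  using arm_conn_segment_subset_P[OF assms] arm_conn_direction[OF assms]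
    arm_conn_open_segment_no_vertex[OF assms] arm_conn_end_not_vertex[OF assms]
    arm_conn_glued[OF assms] arm_conn_start_vertex
  by (intro conjI exI[of _ "(2 - r, 1)"]) (auto intro: exI[of _ 1])

lemma arm_conn_summable_length:
  assumes "0 < r" "r < 1"
  shows "summable (\<lambda>i. dist (arm_conn_start r i) (arm_conn_end r i))"
proof -
  have "dist (arm_conn_start r (Suc (Suc n))) (arm_conn_end r (Suc (Suc n)))
      = r ^ n * (r * norm (2 - r, 1 :: real))" for n
  proof -
    have "dist (arm_conn_start r (Suc (Suc n))) (arm_conn_end r (Suc (Suc n)))
        = norm (arm_conn_end r (Suc (Suc n)) - arm_conn_start r (Suc (Suc n)))"
      by (metis dist_commute dist_norm)
    also have "\<dots> = r ^ Suc n * norm (2 - r, 1 :: real)"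
      using assms by (simp only: arm_conn_tail_diff norm_scaleR) simp
    finally show ?thesis by simp
  qed
  moreover have "summable (\<lambda>n. r ^ n * (r * norm (2 - r, 1 :: real)))"
    using assms by (intro summable_mult2 summable_geometric) simp
  ultimately have "summable (\<lambda>n. dist (arm_conn_start r (n + 2)) (arm_conn_end r (n + 2)))"
    by (simp add: numeral_2_eq_2)
  then show ?thesis by (rule iffD1[OF summable_iff_shift])
qed

lemma arm_conn_end_tendsto_singularity:
  assumes "0 < r" "r < 1"
  shows "(\<lambda>i. infdist (arm_conn_end r i) (arm_sing r)) \<longlonglongrightarrow> 0"
proof -
  have corner: "(arm_s r (Suc n), r ^ Suc n) \<in> arm_sing r" for n
  proof -
    have "(arm_s r (Suc (Suc n) - 1), arm_l r (Suc (Suc n))) \<in> arm_vert r"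
      unfolding arm_vert_def by (rule UN_I[of "Suc (Suc n)"]) simp_all
    then show ?thesis by (simp add: arm_sing_def)
  qed
  have bound: "infdist (arm_conn_end r (Suc (Suc n))) (arm_sing r) \<le> r ^ n * (r * (1 - r))" for n
  proof -
    have "infdist (arm_conn_end r (Suc (Suc n))) (arm_sing r)
        \<le> dist (arm_conn_end r (Suc (Suc n))) (arm_s r (Suc n), r ^ Suc n)"
      by (rule infdist_le[OF corner])
    also have "\<dots> = r ^ n * (r * (1 - r))"
      using assms by (simp add: dist_Pair_Pair dist_real_def)
    finally show ?thesis .
  qed
  have "(\<lambda>n. infdist (arm_conn_end r (n + 2)) (arm_sing r)) \<longlonglongrightarrow> 0"
  proof (rule Lim_null_comparison[OF always_eventually])
    show "\<forall>n. norm (infdist (arm_conn_end r (n + 2)) (arm_sing r)) \<le> r ^ n * (r * (1 - r))"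
      using bound by (simp add: numeral_2_eq_2 infdist_nonneg)
    show "(\<lambda>n. r ^ n * (r * (1 - r))) \<longlonglongrightarrow> 0"
      using assms by (intro tendsto_mult_left_zero LIMSEQ_power_zero) simp
  qed
  then show ?thesis by (rule LIMSEQ_offset)
qed

lemma arm_conn_meets_squares:
  assumes "0 < r" "r < 1" "1 \<le> k"
  shows "arm_trace (arm_conn_start r) (arm_conn_end r) UNIV \<inter> arm_sq r k \<noteq> {}"
proof (cases k rule: nat_cases_0_1_SucSuc)
  case 1
  have "arm_conn_start r 0 \<in> arm_trace (arm_conn_start r) (arm_conn_end r) UNIV"
    unfolding arm_trace_def by (rule UN_I[of 0]) auto
  moreover have "arm_conn_start r 0 \<in> arm_sq r k" using 1 by (simp add: arm_sq_def)
  ultimately show ?thesis by blast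
next
  case (SucSuc n)
  have "arm_conn_end r k \<in> arm_trace (arm_conn_start r) (arm_conn_end r) UNIV"
    unfolding arm_trace_def by (rule UN_I[of k]) auto
  moreover obtain x where "arm_conn_end r k = (x, r ^ Suc n)"
    and "arm_s r (Suc n) < x" "x < arm_s r (Suc (Suc n))"
    using arm_conn_tail_coords[OF assms(1,2), of n] SucSuc by metis
  then have "arm_conn_end r k \<in> arm_sq r k" using SucSuc assms by (simp add: arm_sq_def)
  ultimately show ?thesis by blast
qed (use assms in simp)

theorem theorem2p1:
  fixes r :: real
  assumes "0 < r" and "r < 1"
  shows "\<exists>a b I. arm_saddle_connection r (2 - r, 1) a b I \<and>
           (\<forall>k\<ge>1. arm_trace a b I \<inter> arm_sq r k \<noteq> {})"
proof -
  have "arm_saddle_connection r (2 - r, 1) (arm_conn_start r) (arm_conn_end r) UNIV"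
    unfolding arm_saddle_connection_def
    using arm_conn_traj arm_conn_summable_length arm_conn_end_tendsto_singularity assms
    by blast
  then show ?thesis using arm_conn_meets_squares[OF assms] by blast
qed

end
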